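(* Let $\delta\ge 0$ and let $Z_\delta(t)$ be the total discounted IBNR claims defined in the context, with claims arriving according to a renewal process with renewal function $m$. Then for every $t>0$, $$\mathbb{E}[Z_\delta(t)]=\mu_1 e^{-\delta t}\int_0^t \mathcal{T}_\delta w(t-x)\,\mathrm{d}m(x).$$ In particular, for $\delta=0$, $\mathbb{E}[Z(t)]=\mu_1\int_0^t \overline{W}(t-x)\,\mathrm{d}m(x)$.
   Context: Let $\{\tau_i\}_{i\ge1}$ be i.i.d. positive interarrival times with cdf $F$ and pdf $f=F'$; set $T_0:=0$, $T_n:=\sum_{i=1}^n\tau_i$, and $N(t):=\max\{i\ge 0: T_i\le t\}$ (a renewal process), with renewal function $m(t):=\mathbb{E}[N(t)]=\sum_{i\ge1}F^{*(i)}(t)$. Let $\{X_i\}_{i\ge1}$ be i.i.d. claim amounts with generic copy $X$ and $\mu_k:=\mathbb{E}[X^k]$, $\mu_0:=1$. Let $\{L_i\}_{i\ge1}$ be i.i.d. reporting delays with cdf $W$, survival function $\overline W=1-W$ and pdf $w=W'$. The three sequences $\{\tau_i\}$, $\{X_i\}$, $\{L_i\}$ are mutually independent. For a force of interest $\delta\ge0$, $Z_\delta(t):=\sum_{i=1}^{\infty}e^{-\delta(T_i+L_i)}\mathbf{1}_{\{T_i\le t<T_i+L_i\}}X_i$ and $Z(t):=Z_0(t)$. The Dickson–Hipp operator is $\mathcal{T}_u g(v):=\int_v^\infty e^{-u(y-v)}g(y)\,\mathrm{d}y$ for $u,v\ge0$. *)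

theory Defs
  imports "HOL-Probability.Probability"
begin

text \<open>Arrival epochs T_n = tau_1 + ... + tau_n (T_0 = 0); sequences are indexed from 1.\<close>
definition arrival :: "(nat \<Rightarrow> 'a \<Rightarrow> real) \<Rightarrow> nat \<Rightarrow> 'a \<Rightarrow> real" where
  "arrival tau n \<omega> = (\<Sum>i\<in>{1..n}. tau i \<omega>)"

definition IBNR_disc ::
  "(nat \<Rightarrow> 'a \<Rightarrow> real) \<Rightarrow> (nat \<Rightarrow> 'a \<Rightarrow> real) \<Rightarrow> (nat \<Rightarrow> 'a \<Rightarrow> real)
     \<Rightarrow> real \<Rightarrow> real \<Rightarrow> 'a \<Rightarrow> real" where
  "IBNR_disc tau X L \<delta> t \<omega> =
     (\<Sum>j. (let i = Suc j in
        exp (- \<delta> * (arrival tau i \<omega> + L i \<omega>)) *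
        (if arrival tau i \<omega> \<le> t \<and> t < arrival tau i \<omega> + L i \<omega> then 1 else 0) * X i \<omega>))"

fun cdf_conv_pow :: "(real \<Rightarrow> real) \<Rightarrow> nat \<Rightarrow> real \<Rightarrow> real" where
  "cdf_conv_pow F 0 t = (if 0 \<le> t then 1 else 0)"
| "cdf_conv_pow F (Suc n) t = (LINT y|interval_measure F. cdf_conv_pow F n (t - y))"

definition renewal_fun :: "(real \<Rightarrow> real) \<Rightarrow> real \<Rightarrow> real" where
  "renewal_fun F t = (\<Sum>n. cdf_conv_pow F (Suc n) t)"

definition dickson_hipp :: "real \<Rightarrow> (real \<Rightarrow> real) \<Rightarrow> real \<Rightarrow> real" where
  "dickson_hipp u g v = (LINT y:{v..}|lborel. exp (- u * (y - v)) * g y)"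

end

theory Submission
  imports Defs
begin

text \<open>Write \<open>Z\<^sub>\<delta>(t) = \<Sum>\<^sub>i h(T\<^sub>i, L\<^sub>i) X\<^sub>i\<close> with
  \<open>h(a, l) = exp (-\<delta> (a + l)) 1{a \<le> t < a + l}\<close>. By independence each summand has expectation
  \<open>\<mu>\<^sub>1 E h(T\<^sub>i, L\<^sub>i)\<close>, and integrating out the delay against its density \<open>w\<close> leaves
  \<open>exp (-\<delta> t) (\<T>\<^sub>\<delta> w)(t - T\<^sub>i)\<close> on the event \<open>T\<^sub>i \<le> t\<close>. Summing over \<open>i\<close> turns the laws
  of the arrival epochs into the renewal measure \<open>\<Sum>\<^sub>i P(T\<^sub>i \<in> \<cdot>)\<close>, whose distribution
  function is \<open>m\<close> because \<open>F\<^sup>*\<^sup>i\<close> is the distribution function of \<open>T\<^sub>i\<close>. Sum and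
  expectation may be interchanged because \<open>P(T\<^sub>i \<le> t) \<le> e\<^sup>t (E exp (-\<tau>))\<^sup>i\<close> decays
  geometrically. For \<open>\<delta> = 0\<close>, \<open>\<T>\<^sub>0 w\<close> is the survival function of the delay.\<close>

lemma integral_suminf_if_summable_integral_norm:
  fixes f :: "nat \<Rightarrow> 'a \<Rightarrow> 'b::{banach, second_countable_topology}"
  assumes f: "\<And>i. integrable M (f i)"
    and summable: "summable (\<lambda>i. \<integral>x. norm (f i x) \<partial>M)"
  shows "(\<integral>x. (\<Sum>i. f i x) \<partial>M) = (\<Sum>i. integral\<^sup>L M (f i))"
proof (rule integral_suminf[OF f _ summable])
  have [measurable]: "f i \<in> borel_measurable M" for i
    using f by auto
  have "(\<integral>\<^sup>+x. (\<Sum>i. ennreal (norm (f i x))) \<partial>M) = (\<Sum>i. \<integral>\<^sup>+x. ennreal (norm (f i x)) \<partial>M)"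
    by (rule nn_integral_suminf) measurable
  also have "\<dots> = (\<Sum>i. ennreal (\<integral>x. norm (f i x) \<partial>M))"
    by (intro suminf_cong nn_integral_eq_integral integrable_norm f) auto
  also have "\<dots> = ennreal (\<Sum>i. \<integral>x. norm (f i x) \<partial>M)"
    by (rule suminf_ennreal2) (auto simp del: real_norm_def intro: summable)
  finally have "(\<integral>\<^sup>+x. (\<Sum>i. ennreal (norm (f i x))) \<partial>M) \<noteq> \<infinity>"
    by simp
  then have "AE x in M. (\<Sum>i. ennreal (norm (f i x))) \<noteq> \<infinity>"
    by (intro nn_integral_PInf_AE) measurable
  then show "AE x in M. summable (\<lambda>i. norm (f i x))"
    by eventually_elim (rule summable_suminf_not_top, auto)
qed

lemma
  fixes g :: "'b \<Rightarrow> 'c::{banach, second_countable_topology}"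
  assumes "distr M N X = distr M N Y" "X \<in> measurable M N" "Y \<in> measurable M N"
    and "g \<in> borel_measurable N"
  shows integrable_comp_eq_if_distr_eq:
      "integrable M (\<lambda>\<omega>. g (X \<omega>)) \<longleftrightarrow> integrable M (\<lambda>\<omega>. g (Y \<omega>))"
    and integral_comp_eq_if_distr_eq: "(\<integral>\<omega>. g (X \<omega>) \<partial>M) = (\<integral>\<omega>. g (Y \<omega>) \<partial>M)"
  using integrable_distr_eq[of X M N g] integrable_distr_eq[of Y M N g]
    integral_distr[of X M N g] integral_distr[of Y M N g] assms
  by simp_all

context prob_space
begin

lemma prob_add_le_eq_integral:
  fixes U V :: "'a \<Rightarrow> real"
  assumes indep: "indep_var borel U borel V"
    and [measurable]: "U \<in> borel_measurable M" "V \<in> borel_measurable M"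
  shows "prob {\<omega> \<in> space M. U \<omega> + V \<omega> \<le> x}
           = (\<integral>y. prob {\<omega> \<in> space M. U \<omega> \<le> x - y} \<partial>distr M borel V)"
proof -
  define \<mu> where "\<mu> = distr M borel U"
  define \<nu> where "\<nu> = distr M borel V"
  interpret \<mu>: prob_space \<mu> unfolding \<mu>_def by (rule prob_space_distr) simp
  interpret \<nu>: prob_space \<nu> unfolding \<nu>_def by (rule prob_space_distr) simp
  interpret P: pair_prob_space \<mu> \<nu> by unfold_locales
  have joint: "distr M (borel \<Otimes>\<^sub>M borel) (\<lambda>\<omega>. (U \<omega>, V \<omega>)) = \<mu> \<Otimes>\<^sub>M \<nu>"
    using indep_var_distribution_eq[of borel U borel V] indep unfolding \<mu>_def \<nu>_def by simp
  define S where "S = {p \<in> space (borel \<Otimes>\<^sub>M borel). fst p + snd p \<le> (x::real)}"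
  have S[measurable]: "S \<in> sets (borel \<Otimes>\<^sub>M borel)"
    unfolding S_def by measurable
  have sets_P: "sets (\<mu> \<Otimes>\<^sub>M \<nu>) = sets (borel \<Otimes>\<^sub>M borel)"
    by (rule sets_pair_measure_cong) (simp_all add: \<mu>_def \<nu>_def)
  have \<mu>_atMost: "measure \<mu> {..a} = prob {\<omega> \<in> space M. U \<omega> \<le> a}" for a
    unfolding \<mu>_def by (subst measure_distr) (auto intro!: arg_cong[where f=prob])
  have "prob {\<omega> \<in> space M. U \<omega> + V \<omega> \<le> x} = measure (\<mu> \<Otimes>\<^sub>M \<nu>) S"
    unfolding joint[symmetric]
    by (subst measure_distr[OF _ S], simp) (auto simp: S_def space_pair_measure intro!: arg_cong[where f=prob])
  also have "\<dots> = enn2real (\<integral>\<^sup>+y. emeasure \<mu> ((\<lambda>a. (a, y)) -` S) \<partial>\<nu>)"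
    using P.emeasure_pair_measure_alt2[of S] sets_P S by (simp add: measure_def)
  also have "(\<lambda>y. emeasure \<mu> ((\<lambda>a. (a, y)) -` S)) = (\<lambda>y. ennreal (measure \<mu> {..x - y}))"
  proof
    fix y
    have "(\<lambda>a. (a, y)) -` S = {..x - y}"
      by (auto simp: S_def space_pair_measure)
    then show "emeasure \<mu> ((\<lambda>a. (a, y)) -` S) = ennreal (measure \<mu> {..x - y})"
      by (simp add: \<mu>.emeasure_eq_measure)
  qed
  also have "enn2real (\<integral>\<^sup>+y. ennreal (measure \<mu> {..x - y}) \<partial>\<nu>) = (\<integral>y. measure \<mu> {..x - y} \<partial>\<nu>)"
  proof (rule integral_eq_nn_integral[symmetric])
    have "mono (cdf \<mu>)"
      by (auto simp: mono_def cdf_def intro!: \<mu>.finite_measure_mono) (simp add: \<mu>_def)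
    then have "cdf \<mu> \<in> borel_measurable borel"
      by (rule borel_measurable_mono)
    then show "(\<lambda>y. measure \<mu> {..x - y}) \<in> borel_measurable \<nu>"
      unfolding \<nu>_def cdf_def by measurable
  qed auto
  finally show ?thesis
    unfolding \<mu>_atMost \<nu>_def .
qed

lemma integrable_exp_neg:
  fixes Y :: "'a \<Rightarrow> real"
  assumes [measurable]: "Y \<in> borel_measurable M" and nonneg: "AE \<omega> in M. 0 \<le> Y \<omega>"
  shows "integrable M (\<lambda>\<omega>. exp (- Y \<omega>))"
proof (rule integrable_const_bound[where B=1])
  show "AE \<omega> in M. norm (exp (- Y \<omega>)) \<le> 1"
    using nonneg by eventually_elim simp
qed measurable

lemma prob_le_exp_mult_expectation_exp_neg:
  fixes Y :: "'a \<Rightarrow> real"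
  assumes [measurable]: "Y \<in> borel_measurable M" and nonneg: "AE \<omega> in M. 0 \<le> Y \<omega>"
  shows "prob {\<omega> \<in> space M. Y \<omega> \<le> x} \<le> exp x * expectation (\<lambda>\<omega>. exp (- Y \<omega>))"
proof -
  have "prob {\<omega> \<in> space M. Y \<omega> \<le> x} = expectation (indicator {\<omega> \<in> space M. Y \<omega> \<le> x})"
    by simp
  also have "\<dots> \<le> expectation (\<lambda>\<omega>. exp x * exp (- Y \<omega>))"
  proof (rule integral_mono)
    show "integrable M (\<lambda>\<omega>. exp x * exp (- Y \<omega>))"
      using integrable_exp_neg[OF assms] by simp
    show "integrable M (indicator {\<omega> \<in> space M. Y \<omega> \<le> x} :: 'a \<Rightarrow> real)"
      by (rule integrable_const_bound[where B=1]) (auto simp: indicator_def)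
  qed (auto simp: indicator_def exp_add[symmetric])
  finally show ?thesis
    by simp
qed

lemma expectation_exp_neg_less_one:
  fixes Y :: "'a \<Rightarrow> real"
  assumes [measurable]: "Y \<in> borel_measurable M" and pos: "AE \<omega> in M. 0 < Y \<omega>"
  shows "expectation (\<lambda>\<omega>. exp (- Y \<omega>)) < 1"
proof -
  have "AE \<omega> in M. 0 \<le> Y \<omega>"
    using pos by eventually_elim simp
  then have exp_int: "integrable M (\<lambda>\<omega>. exp (- Y \<omega>))"
    by (intro integrable_exp_neg) simp
  then have int: "integrable M (\<lambda>\<omega>. 1 - exp (- Y \<omega>))"
    by simp
  have nonneg: "AE \<omega> in M. 0 \<le> 1 - exp (- Y \<omega>)"
    using pos by eventually_elim auto
  have "expectation (\<lambda>\<omega>. 1 - exp (- Y \<omega>)) \<noteq> 0"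
  proof
    assume "expectation (\<lambda>\<omega>. 1 - exp (- Y \<omega>)) = 0"
    then have "AE \<omega> in M. 1 - exp (- Y \<omega>) = 0"
      using integral_nonneg_eq_0_iff_AE[OF int nonneg] by simp
    with pos have "AE \<omega> in M. False"
      by eventually_elim auto
    then show False
      by simp
  qed
  moreover have "0 \<le> expectation (\<lambda>\<omega>. 1 - exp (- Y \<omega>))"
    by (rule integral_nonneg_AE[OF nonneg])
  moreover have "expectation (\<lambda>\<omega>. 1 - exp (- Y \<omega>)) = 1 - expectation (\<lambda>\<omega>. exp (- Y \<omega>))"
    using exp_int by (simp add: prob_space)
  ultimately show ?thesis
    by simp
qed

lemma distributed_density_integrable:
  assumes "distributed M lborel Y w" "\<And>x. 0 \<le> w x"
  shows "distr M borel Y = density lborel w" and "integrable lborel w" and "integral\<^sup>L lborel w = 1"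
proof -
  have [measurable]: "Y \<in> borel_measurable M" "w \<in> borel_measurable borel"
    using distributed_measurable[OF assms(1)] distributed_real_measurable[OF _ assms(1)] assms(2)
    by auto
  have "distr M borel Y = distr M lborel Y"
    by (rule distr_cong) auto
  then show D: "distr M borel Y = density lborel w"
    using distributed_distr_eq_density[OF assms(1)] by simp
  have "(\<integral>\<^sup>+x. ennreal (w x) \<partial>lborel) = emeasure (density lborel w) UNIV"
    by (simp add: emeasure_density)
  also have "\<dots> = 1"
    unfolding D[symmetric] by (simp add: emeasure_distr emeasure_space_1)
  finally have "(\<integral>\<^sup>+x. ennreal (w x) \<partial>lborel) = ennreal 1"
    by simp
  then show "integrable lborel w" "integral\<^sup>L lborel w = 1"
    using nn_integral_eq_integrable[of w lborel 1] assms(2) by auto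
qed

end

section \<open>The Dickson--Hipp operator\<close>

lemma borel_measurable_dickson_hipp[measurable]:
  assumes [measurable]: "w \<in> borel_measurable borel"
  shows "dickson_hipp u w \<in> borel_measurable borel"
proof -
  have sets_eq: "sets (borel \<Otimes>\<^sub>M lborel) = sets (borel \<Otimes>\<^sub>M (borel::real measure))"
    by (rule sets_pair_measure_cong) auto
  have "(\<lambda>(v, y). indicator {v..} y *\<^sub>R (exp (- u * (y - v)) * w y))
      = (\<lambda>p::real \<times> real. (if fst p \<le> snd p then 1 else 0) * (exp (- u * (snd p - fst p)) * w (snd p)))"
    by (auto simp: fun_eq_iff indicator_def)
  then have "(\<lambda>(v, y). indicator {v..} y *\<^sub>R (exp (- u * (y - v)) * w y)) \<in> borel_measurable (borel \<Otimes>\<^sub>M lborel)"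
    unfolding measurable_cong_sets[OF sets_eq refl] by simp
  from lborel.borel_measurable_lebesgue_integral[OF this] show ?thesis
    unfolding dickson_hipp_def set_lebesgue_integral_def by simp
qed

lemma dickson_hipp_nonneg: "(\<And>y. 0 \<le> w y) \<Longrightarrow> 0 \<le> dickson_hipp u w v"
  unfolding dickson_hipp_def set_lebesgue_integral_def by (rule integral_nonneg_AE) auto

lemma (in prob_space) dickson_hipp_zero_eq_survival:
  assumes w_pdf: "distributed M lborel Y w" and w_nonneg: "\<And>x. 0 \<le> w x"
  shows "dickson_hipp 0 w v = 1 - prob {\<omega> \<in> space M. Y \<omega> \<le> v}"
proof -
  note D = distributed_density_integrable[OF assms]
  have [measurable]: "Y \<in> borel_measurable M" "w \<in> borel_measurable borel"
    using distributed_measurable[OF w_pdf] distributed_real_measurable[OF _ w_pdf] w_nonneg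
    by auto
  have restrict_w: "integrable lborel (\<lambda>y. indicator A y * w y)" if "A \<in> sets borel" for A
    using that by (intro Bochner_Integration.integrable_bound[OF D(2)]) (auto simp: indicator_def w_nonneg)
  have "prob {\<omega> \<in> space M. Y \<omega> \<le> v} = measure (density lborel w) {..v}"
    unfolding D(1)[symmetric] by (subst measure_distr) (auto intro!: arg_cong[where f=prob])
  also have "\<dots> = enn2real (\<integral>\<^sup>+y. ennreal (indicator {..v} y * w y) \<partial>lborel)"
    unfolding measure_def
    by (subst emeasure_density) (auto intro!: arg_cong[where f=enn2real] nn_integral_cong simp: indicator_def)
  also have "\<dots> = (\<integral>y. indicator {..<v} y * w y \<partial>lborel)"
    using AE_lborel_singleton[of v]
    by (subst nn_integral_eq_integral[OF restrict_w])
      (auto simp: w_nonneg integral_nonneg_AE indicator_def intro!: integral_cong_AE elim!: eventually_mono)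
  finally have "prob {\<omega> \<in> space M. Y \<omega> \<le> v} = (\<integral>y. indicator {..<v} y * w y \<partial>lborel)" .
  moreover have "(\<integral>y. indicator {v..} y * w y \<partial>lborel) + (\<integral>y. indicator {..<v} y * w y \<partial>lborel) = 1"
  proof -
    have "(\<integral>y. indicator {v..} y * w y \<partial>lborel) + (\<integral>y. indicator {..<v} y * w y \<partial>lborel)
        = (\<integral>y. indicator {v..} y * w y + indicator {..<v} y * w y \<partial>lborel)"
      by (rule Bochner_Integration.integral_add[symmetric]) (auto intro: restrict_w)
    also have "\<dots> = integral\<^sup>L lborel w"
      by (intro Bochner_Integration.integral_cong) (auto simp: indicator_def)
    finally show ?thesis
      using D(3) by simp
  qed
  ultimately show ?thesis
    unfolding dickson_hipp_def set_lebesgue_integral_def by simp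
qed

definition pending_weight :: "real \<Rightarrow> real \<Rightarrow> real \<Rightarrow> real \<Rightarrow> real" where
  "pending_weight \<delta> t a l = exp (- \<delta> * (a + l)) * (if a \<le> t \<and> t < a + l then 1 else 0)"

definition pending_kernel :: "(real \<Rightarrow> real) \<Rightarrow> real \<Rightarrow> real \<Rightarrow> real \<Rightarrow> real" where
  "pending_kernel w \<delta> t a = (if a \<le> t then exp (- \<delta> * t) * dickson_hipp \<delta> w (t - a) else 0)"

lemma borel_measurable_pending_weight[measurable]:
  assumes [measurable]: "f \<in> borel_measurable N" "g \<in> borel_measurable N"
  shows "(\<lambda>x. pending_weight \<delta> t (f x) (g x)) \<in> borel_measurable N"
  unfolding pending_weight_def by measurable

lemma pending_weight_nonneg: "0 \<le> pending_weight \<delta> t a l"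
  by (simp add: pending_weight_def)

lemma pending_weight_le_one: "\<delta> \<ge> 0 \<Longrightarrow> t \<ge> 0 \<Longrightarrow> pending_weight \<delta> t a l \<le> 1"
  by (auto simp: pending_weight_def)

lemma pending_weight_le_indicator:
  "\<delta> \<ge> 0 \<Longrightarrow> t \<ge> 0 \<Longrightarrow> pending_weight \<delta> t a l \<le> (if a \<le> t then 1 else 0)"
  by (auto simp: pending_weight_def)

lemma borel_measurable_pending_kernel[measurable]:
  assumes [measurable]: "w \<in> borel_measurable borel"
  shows "pending_kernel w \<delta> t \<in> borel_measurable borel"
  unfolding pending_kernel_def by measurable

lemma pending_kernel_nonneg: "(\<And>y. 0 \<le> w y) \<Longrightarrow> 0 \<le> pending_kernel w \<delta> t a"
  by (simp add: pending_kernel_def dickson_hipp_nonneg)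

lemma nn_integral_pending_weight_density:
  assumes w[measurable]: "w \<in> borel_measurable borel"
    and w_nonneg: "\<And>x. 0 \<le> w x" and w_int: "integrable lborel w"
    and \<delta>: "\<delta> \<ge> 0" and t: "t \<ge> 0"
  shows "(\<integral>\<^sup>+l. ennreal (pending_weight \<delta> t a l) \<partial>density lborel w) = ennreal (pending_kernel w \<delta> t a)"
proof (cases "a \<le> t")
  case False
  then show ?thesis
    by (simp add: pending_weight_def pending_kernel_def)
next
  case True
  have [measurable]: "pending_weight \<delta> t a \<in> borel_measurable borel"
    unfolding pending_weight_def by measurable
  define G where "G l = indicator {t - a..} l * (exp (- \<delta> * t) * (exp (- \<delta> * (l - (t - a))) * w l))" for l
  have "(\<integral>\<^sup>+l. ennreal (pending_weight \<delta> t a l) \<partial>density lborel w)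
      = (\<integral>\<^sup>+l. ennreal (w l * pending_weight \<delta> t a l) \<partial>lborel)"
    by (subst nn_integral_density) (auto simp: ennreal_mult w_nonneg pending_weight_nonneg)
  also have "\<dots> = (\<integral>\<^sup>+l. ennreal (G l) \<partial>lborel)"
    using AE_lborel_singleton[of "t - a"]
  proof (intro nn_integral_cong_AE, eventually_elim)
    case (elim l)
    have "exp (- \<delta> * t) * exp (- \<delta> * (l - (t - a))) = exp (- \<delta> * (a + l))"
      unfolding exp_add[symmetric] by (simp add: algebra_simps)
    with elim True show ?case
      by (auto simp: G_def pending_weight_def indicator_def mult.commute mult.left_commute)
  qed
  also have "\<dots> = ennreal (integral\<^sup>L lborel G)"
  proof (rule nn_integral_eq_integral)
    show "integrable lborel G"
    proof (rule Bochner_Integration.integrable_bound[OF w_int])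
      show "G \<in> borel_measurable lborel"
        unfolding G_def by measurable
      have "exp (- \<delta> * t) * exp (- \<delta> * (l - (t - a))) \<le> 1" if "t - a \<le> l" for l
        using \<delta> t that by (intro mult_le_one) auto
      then show "AE l in lborel. norm (G l) \<le> norm (w l)"
        by (auto simp: G_def indicator_def abs_mult w_nonneg mult.assoc[symmetric] intro!: mult_left_le_one_le)
    qed
  qed (auto simp: G_def w_nonneg)
  also have "integral\<^sup>L lborel G = pending_kernel w \<delta> t a"
    using True unfolding G_def pending_kernel_def dickson_hipp_def set_lebesgue_integral_def
    by (simp add: mult.left_commute[of "indicat_real _ _"])
  finally show ?thesis .
qed

locale ibnr_model = prob_space M
  for M :: "'a measure" +
  fixes tau X L :: "nat \<Rightarrow> 'a \<Rightarrow> real"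
    and F w :: "real \<Rightarrow> real"
  assumes indep: "indep_vars (\<lambda>_. borel)
          (\<lambda>(k::nat, i). if k = 0 then tau i else if k = 1 then X i else L i)
          ({0, 1, 2} \<times> {1..})"
    and tau_id: "\<And>i. i \<ge> 1 \<Longrightarrow> distr M borel (tau i) = distr M borel (tau 1)"
    and X_id: "\<And>i. i \<ge> 1 \<Longrightarrow> distr M borel (X i) = distr M borel (X 1)"
    and L_id: "\<And>i. i \<ge> 1 \<Longrightarrow> distr M borel (L i) = distr M borel (L 1)"
    and tau_pos: "\<And>i. i \<ge> 1 \<Longrightarrow> AE \<omega> in M. tau i \<omega> > 0"
    and F_def: "\<And>x. F x = prob {\<omega> \<in> space M. tau 1 \<omega> \<le> x}"
    and w_nonneg: "\<And>x. 0 \<le> w x"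
    and w_pdf: "distributed M lborel (L 1) (\<lambda>x. ennreal (w x))"
    and X_int: "integrable M (X 1)"
begin

definition claim_data :: "nat \<times> nat \<Rightarrow> 'a \<Rightarrow> real" where
  "claim_data = (\<lambda>(k, i). if k = 0 then tau i else if k = 1 then X i else L i)"

lemma indep_vars_claim_data: "indep_vars (\<lambda>_. borel) claim_data ({0, 1, 2} \<times> {1..})"
  using indep unfolding claim_data_def .

lemma indep_var_claim_data_blocks:
  assumes "A \<subseteq> {0, 1, 2} \<times> {1..}" "B \<subseteq> {0, 1, 2} \<times> {1..}" "A \<inter> B = {}"
    and "g \<in> measurable (PiM A (\<lambda>_. borel)) borel" "h \<in> measurable (PiM B (\<lambda>_. borel)) borel"
  shows "indep_var borel (\<lambda>\<omega>. g (restrict (\<lambda>p. claim_data p \<omega>) A))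
           borel (\<lambda>\<omega>. h (restrict (\<lambda>p. claim_data p \<omega>) B))"
  using indep_var_compose[OF indep_var_restrict[OF indep_vars_claim_data] assms(4,5)] assms(1-3)
  by (simp add: comp_def Int_commute)

lemma
  assumes "i \<ge> 1"
  shows tau_measurable[measurable]: "tau i \<in> borel_measurable M"
    and X_measurable[measurable]: "X i \<in> borel_measurable M"
    and L_measurable[measurable]: "L i \<in> borel_measurable M"
  using indep_vars_claim_data assms unfolding indep_vars_def
  by (auto simp: claim_data_def dest!: bspec[of _ _ "(0, i)"] bspec[of _ _ "(1, i)"] bspec[of _ _ "(2, i)"])

abbreviation T :: "nat \<Rightarrow> 'a \<Rightarrow> real" where
  "T \<equiv> arrival tau"

lemma arrival_measurable[measurable]: "T n \<in> borel_measurable M"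
  unfolding arrival_def by measurable

lemma arrival_0: "T 0 \<omega> = 0"
  by (simp add: arrival_def)

lemma arrival_Suc: "T (Suc n) \<omega> = T n \<omega> + tau (Suc n) \<omega>"
  by (simp add: arrival_def)

lemma arrival_eq_sum: "T n = (\<lambda>\<omega>. \<Sum>j\<in>{1..n}. tau j \<omega>)"
  by (simp add: arrival_def fun_eq_iff)

lemma indep_arrival_interarrival: "indep_var borel (T n) borel (tau (Suc n))"
proof -
  have "{0} \<times> {1..n} \<subseteq> {0, 1, 2} \<times> {1..}"
    by auto
  from indep_var_claim_data_blocks[OF this, of "{(0, Suc n)}"
      "\<lambda>f. \<Sum>j\<in>{1..n}. f (0, j)" "\<lambda>f. f (0, Suc n)"]
  show ?thesis
    by (simp add: claim_data_def arrival_eq_sum)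
qed

lemma indep_arrival_delay:
  assumes "i \<ge> 1"
  shows "indep_var borel (T i) borel (L i)"
proof -
  have "{0} \<times> {1..i} \<subseteq> {0, 1, 2} \<times> {1..}"
    by auto
  from indep_var_claim_data_blocks[OF this, of "{(2, i)}"
      "\<lambda>f. \<Sum>j\<in>{1..i}. f (0, j)" "\<lambda>f. f (2, i)"] assms
  show ?thesis
    by (simp add: claim_data_def arrival_eq_sum)
qed

lemma indep_pending_weight_claim:
  assumes "i \<ge> 1"
  shows "indep_var borel (\<lambda>\<omega>. pending_weight \<delta> t (T i \<omega>) (L i \<omega>)) borel (X i)"
proof -
  have "{0} \<times> {1..i} \<union> {(2, i)} \<subseteq> {0, 1, 2} \<times> {1..}"
    using assms by auto
  from indep_var_claim_data_blocks[OF this, of "{(1, i)}"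
      "\<lambda>f. pending_weight \<delta> t (\<Sum>j\<in>{1..i}. f (0, j)) (f (2, i))" "\<lambda>f. f (1, i)"] assms
  show ?thesis
    by (simp add: claim_data_def arrival_eq_sum)
qed

lemma tau_pos_all: "AE \<omega> in M. \<forall>i\<ge>1. 0 < tau i \<omega>"
  using tau_pos by (subst AE_all_countable) auto

lemma arrival_nonneg_AE: "AE \<omega> in M. 0 \<le> T n \<omega>"
  using tau_pos_all
proof eventually_elim
  case (elim \<omega>)
  then show ?case
    unfolding arrival_def by (intro sum_nonneg) (simp add: less_imp_le)
qed

lemma arrival_Suc_pos_AE: "AE \<omega> in M. 0 < T (Suc n) \<omega>"
  using arrival_nonneg_AE[of n] tau_pos[of "Suc n", simplified]
  by eventually_elim (simp add: arrival_Suc add_nonneg_pos)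

section \<open>Distribution of the arrival epochs\<close>

lemma distr_tau_eq_interval_measure: "i \<ge> 1 \<Longrightarrow> distr M borel (tau i) = interval_measure F"
proof -
  assume i: "i \<ge> 1"
  interpret D: real_distribution "distr M borel (tau 1)"
    by simp
  have "F = cdf (distr M borel (tau 1))"
    by (intro ext) (auto simp: F_def cdf_def measure_distr intro!: arg_cong[where f=prob])
  then have "interval_measure F = distr M borel (tau 1)"
    using D.cdf_nondecreasing D.cdf_is_right_cont D.cdf_lim_at_bot D.cdf_lim_at_top_prob
    by (intro cdf_unique real_distribution_interval_measure) (auto simp: cdf_interval_measure)
  with tau_id[OF i] show ?thesis
    by simp
qed

lemma cdf_conv_pow_eq_prob_arrival_le: "cdf_conv_pow F n x = prob {\<omega> \<in> space M. T n \<omega> \<le> x}"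
proof (induction n arbitrary: x)
  case 0
  then show ?case
    by (simp add: arrival_0 prob_space)
next
  case (Suc n)
  then show ?case
    using prob_add_le_eq_integral[OF indep_arrival_interarrival, where x=x]
    by (simp add: arrival_Suc distr_tau_eq_interval_measure)
qed

definition tau_laplace :: real where
  "tau_laplace = expectation (\<lambda>\<omega>. exp (- tau 1 \<omega>))"

lemma expectation_exp_neg_arrival: "expectation (\<lambda>\<omega>. exp (- T n \<omega>)) = tau_laplace ^ n"
proof (induction n)
  case 0
  then show ?case
    by (simp add: arrival_0 prob_space)
next
  case (Suc n)
  have "AE \<omega> in M. 0 \<le> tau (Suc n) \<omega>"
    using tau_pos[of "Suc n"] by (auto elim!: eventually_mono)
  then have int_tau: "integrable M (\<lambda>\<omega>. exp (- tau (Suc n) \<omega>))"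
    by (intro integrable_exp_neg) simp_all
  have int_T: "integrable M (\<lambda>\<omega>. exp (- T n \<omega>))"
    by (intro integrable_exp_neg arrival_nonneg_AE) simp
  have indep_exp: "indep_var borel ((\<lambda>a. exp (- a)) \<circ> T n) borel ((\<lambda>a. exp (- a)) \<circ> tau (Suc n))"
    by (rule indep_var_compose[OF indep_arrival_interarrival]) auto
  have exp_T_Suc: "(\<lambda>\<omega>. exp (- T (Suc n) \<omega>)) = (\<lambda>\<omega>. exp (- T n \<omega>) * exp (- tau (Suc n) \<omega>))"
    by (simp add: fun_eq_iff arrival_Suc exp_add[symmetric])
  have "expectation (\<lambda>\<omega>. exp (- T (Suc n) \<omega>))
      = expectation (\<lambda>\<omega>. exp (- T n \<omega>)) * expectation (\<lambda>\<omega>. exp (- tau (Suc n) \<omega>))"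
    unfolding exp_T_Suc
    by (rule indep_var_lebesgue_integral[OF indep_exp, unfolded comp_def, OF int_T int_tau])
  also have "expectation (\<lambda>\<omega>. exp (- tau (Suc n) \<omega>)) = tau_laplace"
    unfolding tau_laplace_def
    by (rule integral_comp_eq_if_distr_eq[where g="\<lambda>a. exp (- a)" and N=borel])
      (use tau_id[of "Suc n"] in simp_all)
  finally show ?case
    using Suc by simp
qed

lemma summable_prob_arrival_le: "summable (\<lambda>n. prob {\<omega> \<in> space M. T (Suc n) \<omega> \<le> x})"
proof (rule summable_comparison_test)
  have "0 \<le> tau_laplace" "tau_laplace < 1"
    unfolding tau_laplace_def using tau_pos[of 1]
    by (auto intro!: integral_nonneg_AE expectation_exp_neg_less_one)
  then show "summable (\<lambda>n. exp x * tau_laplace ^ Suc n)"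
    by (intro summable_mult) (simp add: summable_geometric)
  show "\<exists>N. \<forall>n\<ge>N. norm (prob {\<omega> \<in> space M. T (Suc n) \<omega> \<le> x}) \<le> exp x * tau_laplace ^ Suc n"
    using prob_le_exp_mult_expectation_exp_neg[OF _ arrival_nonneg_AE]
    by (simp add: expectation_exp_neg_arrival del: power_Suc)
qed

lemma renewal_fun_eq_sum_prob: "renewal_fun F x = (\<Sum>n. prob {\<omega> \<in> space M. T (Suc n) \<omega> \<le> x})"
  unfolding renewal_fun_def cdf_conv_pow_eq_prob_arrival_le ..

section \<open>The renewal measure\<close>

text \<open>The image of \<open>count_space \<nat> \<Otimes> M\<close> under \<open>(n, \<omega>) \<mapsto> T (n + 1) \<omega>\<close> is
  \<open>\<Sum>\<^sub>n P(T (n + 1) \<in> \<cdot>)\<close>, the expected number of arrivals in a set.\<close>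

definition renewal_measure :: "real measure" where
  "renewal_measure = distr (count_space UNIV \<Otimes>\<^sub>M M) borel (\<lambda>p. T (Suc (fst p)) (snd p))"

lemma sets_renewal_measure[simp, measurable_cong]: "sets renewal_measure = sets borel"
  by (simp add: renewal_measure_def)

lemma space_renewal_measure[simp]: "space renewal_measure = UNIV"
  by (simp add: renewal_measure_def)

lemma nn_integral_renewal_measure:
  assumes [measurable]: "g \<in> borel_measurable borel"
  shows "(\<integral>\<^sup>+x. g x \<partial>renewal_measure) = (\<Sum>n. \<integral>\<^sup>+\<omega>. g (T (Suc n) \<omega>) \<partial>M)"
proof -
  have [measurable]: "(\<lambda>p. T (Suc (fst p)) (snd p)) \<in> borel_measurable (count_space UNIV \<Otimes>\<^sub>M M)"
    by (rule measurable_pair_measure_countable1) auto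
  have "(\<integral>\<^sup>+x. g x \<partial>renewal_measure) = (\<integral>\<^sup>+p. g (T (Suc (fst p)) (snd p)) \<partial>(count_space UNIV \<Otimes>\<^sub>M M))"
    unfolding renewal_measure_def by (rule nn_integral_distr) auto
  also have "\<dots> = (\<integral>\<^sup>+n. \<integral>\<^sup>+\<omega>. g (T (Suc n) \<omega>) \<partial>M \<partial>count_space UNIV)"
    by (subst nn_integral_fst[symmetric]) (simp_all, measurable)
  also have "\<dots> = (\<Sum>n. \<integral>\<^sup>+\<omega>. g (T (Suc n) \<omega>) \<partial>M)"
    by (simp add: nn_integral_count_space_nat)
  finally show ?thesis .
qed

lemma emeasure_renewal_measure_atMost: "emeasure renewal_measure {..x} = ennreal (renewal_fun F x)"
proof -
  have "emeasure renewal_measure {..x} = (\<integral>\<^sup>+y. indicator {..x} y \<partial>renewal_measure)"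
    by simp
  also have "\<dots> = (\<Sum>n. \<integral>\<^sup>+\<omega>. indicator {..x} (T (Suc n) \<omega>) \<partial>M)"
    by (rule nn_integral_renewal_measure) simp
  also have "\<dots> = (\<Sum>n. ennreal (prob {\<omega> \<in> space M. T (Suc n) \<omega> \<le> x}))"
  proof (rule suminf_cong)
    fix n
    have "(\<integral>\<^sup>+\<omega>. indicator {..x} (T (Suc n) \<omega>) \<partial>M)
        = (\<integral>\<^sup>+\<omega>. indicator {\<omega> \<in> space M. T (Suc n) \<omega> \<le> x} \<omega> \<partial>M)"
      by (intro nn_integral_cong) (auto simp: indicator_def)
    then show "(\<integral>\<^sup>+\<omega>. indicator {..x} (T (Suc n) \<omega>) \<partial>M) = ennreal (prob {\<omega> \<in> space M. T (Suc n) \<omega> \<le> x})"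
      by (simp add: emeasure_eq_measure)
  qed
  also have "\<dots> = ennreal (renewal_fun F x)"
    unfolding renewal_fun_eq_sum_prob by (rule suminf_ennreal2) (auto simp: summable_prob_arrival_le)
  finally show ?thesis .
qed

lemma renewal_fun_nonneg: "0 \<le> renewal_fun F x"
  unfolding renewal_fun_eq_sum_prob by (rule suminf_nonneg) (auto simp: summable_prob_arrival_le)

lemma renewal_fun_mono: "x \<le> y \<Longrightarrow> renewal_fun F x \<le> renewal_fun F y"
  unfolding renewal_fun_eq_sum_prob
  by (intro suminf_le summable_prob_arrival_le allI finite_measure_mono) auto

lemma renewal_fun_right_continuous: "continuous (at_right a) (renewal_fun F)"
  unfolding continuous_within
proof (rule tendsto_at_right_sequentially[where b="a + 1"])
  fix S :: "nat \<Rightarrow> real"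
  assume S: "\<And>n. a < S n" "\<And>n. S n < a + 1" "decseq S" "S \<longlonglongrightarrow> a"
  have "(\<lambda>n. emeasure renewal_measure {..S n}) \<longlonglongrightarrow> emeasure renewal_measure (\<Inter>n. {..S n})"
    using S(3) by (intro Lim_emeasure_decseq) (auto simp: decseq_def emeasure_renewal_measure_atMost)
  also have "(\<Inter>n. {..S n}) = {..a}"
    using decseq_ge[OF S(3,4)] by (auto intro: order_trans LIMSEQ_le_const[OF S(4)])
  finally have "(\<lambda>n. enn2real (emeasure renewal_measure {..S n})) \<longlonglongrightarrow> renewal_fun F a"
    by (intro tendsto_enn2real) (simp_all add: emeasure_renewal_measure_atMost renewal_fun_nonneg)
  then show "(\<lambda>n. renewal_fun F (S n)) \<longlonglongrightarrow> renewal_fun F a"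
    by (simp add: emeasure_renewal_measure_atMost renewal_fun_nonneg del: renewal_fun_def)
qed simp

lemma interval_measure_renewal_fun: "interval_measure (renewal_fun F) = renewal_measure"
proof (rule measure_eqI_generator_eq[where \<Omega>=UNIV and E="range (\<lambda>(a, b). {a<..b::real})"
      and A="\<lambda>i. {- real (i::nat)<..real i}"])
  fix I assume "I \<in> range (\<lambda>(a, b). {a<..b::real})"
  then obtain a b where I: "I = {a<..b}"
    by auto
  have "emeasure renewal_measure {a<..b} = renewal_fun F b - renewal_fun F a" if "a \<le> b"
  proof -
    have "{a<..b} = {..b} - {..a}"
      by auto
    then show ?thesis
      using that by (simp add: emeasure_Diff emeasure_renewal_measure_atMost ennreal_minus renewal_fun_nonneg)
  qed
  then show "emeasure (interval_measure (renewal_fun F)) I = emeasure renewal_measure I"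
    unfolding I by (cases "a \<le> b")
      (simp_all add: emeasure_interval_measure_Ioc renewal_fun_mono renewal_fun_right_continuous)
next
  show "(\<Union>i. {- real (i::nat)<..real i}) = UNIV"
    by (rule UN_Ioc_eq_UNIV)
  fix i :: nat
  show "emeasure (interval_measure (renewal_fun F)) {- real i<..real i} \<noteq> \<infinity>"
    by (simp add: emeasure_interval_measure_Ioc renewal_fun_mono renewal_fun_right_continuous)
qed (auto simp: borel_sigma_sets_Ioc Int_stable_def)

lemma AE_renewal_measure_pos: "AE x in renewal_measure. 0 < x"
proof -
  have "emeasure M {\<omega> \<in> space M. T (Suc n) \<omega> \<le> 0} = 0" for n
    using arrival_Suc_pos_AE[of n] by (subst (asm) AE_iff_measurable[OF _ refl]) (auto simp: not_less)
  then have "renewal_fun F 0 = 0"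
    unfolding renewal_fun_eq_sum_prob by (simp add: emeasure_eq_measure)
  then have "emeasure renewal_measure {..0} = 0"
    by (simp add: emeasure_renewal_measure_atMost)
  then show ?thesis
    by (subst AE_iff_measurable[OF _ refl]) (auto simp: not_less atMost_def)
qed

section \<open>Expected discounted IBNR claims\<close>

lemma w_measurable[measurable]: "w \<in> borel_measurable borel"
  using distributed_real_measurable[OF _ w_pdf] w_nonneg by simp

lemma integrable_pending_weight:
  assumes \<delta>: "\<delta> \<ge> 0" and t: "t \<ge> 0" and i: "i \<ge> 1"
  shows "integrable M (\<lambda>\<omega>. pending_weight \<delta> t (T i \<omega>) (L i \<omega>))"
proof (rule integrable_const_bound[where B=1])
  show "(\<lambda>\<omega>. pending_weight \<delta> t (T i \<omega>) (L i \<omega>)) \<in> borel_measurable M"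
    using i by measurable
  show "AE \<omega> in M. norm (pending_weight \<delta> t (T i \<omega>) (L i \<omega>)) \<le> 1"
    using pending_weight_le_one[OF \<delta> t] by (simp add: pending_weight_nonneg)
qed

lemma expectation_pending_weight_le:
  assumes \<delta>: "\<delta> \<ge> 0" and t: "t \<ge> 0" and i: "i \<ge> 1"
  shows "expectation (\<lambda>\<omega>. pending_weight \<delta> t (T i \<omega>) (L i \<omega>)) \<le> prob {\<omega> \<in> space M. T i \<omega> \<le> t}"
proof -
  have "expectation (\<lambda>\<omega>. pending_weight \<delta> t (T i \<omega>) (L i \<omega>))
      \<le> expectation (indicator {\<omega> \<in> space M. T i \<omega> \<le> t})"
  proof (rule integral_mono)
    show "integrable M (\<lambda>\<omega>. pending_weight \<delta> t (T i \<omega>) (L i \<omega>))"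
      by (rule integrable_pending_weight[OF assms])
    show "integrable M (indicator {\<omega> \<in> space M. T i \<omega> \<le> t} :: 'a \<Rightarrow> real)"
      by (rule integrable_const_bound[where B=1]) (auto simp: indicator_def)
    show "pending_weight \<delta> t (T i \<omega>) (L i \<omega>) \<le> indicator {\<omega> \<in> space M. T i \<omega> \<le> t} \<omega>"
      if "\<omega> \<in> space M" for \<omega>
      using pending_weight_le_indicator[OF \<delta> t, of "T i \<omega>" "L i \<omega>"] that
      by (simp add: indicator_def split: if_splits)
  qed
  then show ?thesis
    by simp
qed

lemma ennreal_expectation_pending_weight:
  assumes i: "i \<ge> 1" and \<delta>: "\<delta> \<ge> 0" and t: "t \<ge> 0"
  shows "ennreal (expectation (\<lambda>\<omega>. pending_weight \<delta> t (T i \<omega>) (L i \<omega>)))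
           = (\<integral>\<^sup>+\<omega>. ennreal (pending_kernel w \<delta> t (T i \<omega>)) \<partial>M)"
proof -
  define \<mu> where "\<mu> = distr M borel (T i)"
  define \<kappa> where "\<kappa> = distr M borel (L i)"
  note w_density = distributed_density_integrable[OF w_pdf w_nonneg]
  have \<kappa>_density: "\<kappa> = density lborel w"
    unfolding \<kappa>_def using L_id[OF i] w_density(1) by simp
  interpret \<mu>: prob_space \<mu> unfolding \<mu>_def by (rule prob_space_distr) simp
  have [measurable]: "L i \<in> borel_measurable M"
    using i by simp
  interpret \<kappa>: prob_space \<kappa> unfolding \<kappa>_def by (rule prob_space_distr) simp
  interpret P: pair_prob_space \<mu> \<kappa> by unfold_locales
  have joint: "distr M (borel \<Otimes>\<^sub>M borel) (\<lambda>\<omega>. (T i \<omega>, L i \<omega>)) = \<mu> \<Otimes>\<^sub>M \<kappa>"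
    using indep_var_distribution_eq[of borel "T i" borel "L i"] indep_arrival_delay[OF i]
    unfolding \<mu>_def \<kappa>_def by simp
  have sets_P: "sets (\<mu> \<Otimes>\<^sub>M \<kappa>) = sets (borel \<Otimes>\<^sub>M borel)"
    by (rule sets_pair_measure_cong) (simp_all add: \<mu>_def \<kappa>_def)
  have "ennreal (expectation (\<lambda>\<omega>. pending_weight \<delta> t (T i \<omega>) (L i \<omega>)))
      = (\<integral>\<^sup>+\<omega>. ennreal (pending_weight \<delta> t (T i \<omega>) (L i \<omega>)) \<partial>M)"
    using integrable_pending_weight[OF \<delta> t i]
    by (rule nn_integral_eq_integral[symmetric]) (simp add: pending_weight_nonneg)
  also have "\<dots> = (\<integral>\<^sup>+p. ennreal (pending_weight \<delta> t (fst p) (snd p)) \<partial>(\<mu> \<Otimes>\<^sub>M \<kappa>))"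
    unfolding joint[symmetric] using i by (subst nn_integral_distr) auto
  also have "\<dots> = (\<integral>\<^sup>+a. \<integral>\<^sup>+l. ennreal (pending_weight \<delta> t a l) \<partial>\<kappa> \<partial>\<mu>)"
    using \<kappa>.nn_integral_fst[of "\<lambda>p. ennreal (pending_weight \<delta> t (fst p) (snd p))" \<mu>]
    by (simp add: measurable_cong_sets[OF sets_P refl])
  also have "\<dots> = (\<integral>\<^sup>+a. ennreal (pending_kernel w \<delta> t a) \<partial>\<mu>)"
    unfolding \<kappa>_density using w_density(2) \<delta> t
    by (intro nn_integral_cong nn_integral_pending_weight_density) (auto simp: w_nonneg)
  also have "\<dots> = (\<integral>\<^sup>+\<omega>. ennreal (pending_kernel w \<delta> t (T i \<omega>)) \<partial>M)"
    unfolding \<mu>_def by (subst nn_integral_distr) auto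
  finally show ?thesis .
qed

lemma expectation_pending_claim:
  assumes i: "i \<ge> 1" and \<delta>: "\<delta> \<ge> 0" and t: "t \<ge> 0"
  defines "h \<equiv> \<lambda>\<omega>. pending_weight \<delta> t (T i \<omega>) (L i \<omega>)"
  shows "integrable M (\<lambda>\<omega>. h \<omega> * X i \<omega>)"
    and "expectation (\<lambda>\<omega>. h \<omega> * X i \<omega>) = expectation h * expectation (X 1)"
    and "expectation (\<lambda>\<omega>. norm (h \<omega> * X i \<omega>)) = expectation h * expectation (\<lambda>\<omega>. norm (X 1 \<omega>))"
proof -
  have indep_h_X: "indep_var borel h borel (X i)"
    unfolding h_def by (rule indep_pending_weight_claim[OF i])
  have h_int: "integrable M h"
    unfolding h_def by (rule integrable_pending_weight[OF \<delta> t i])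
  have X_i: "X i \<in> borel_measurable M" "X 1 \<in> borel_measurable M"
    using i by (simp_all only: X_measurable order_refl)
  have X_i_int: "integrable M (X i)"
    using X_int integrable_comp_eq_if_distr_eq[OF X_id[OF i] X_i, of "\<lambda>x. x"] by simp
  have E_X_i: "expectation (\<lambda>\<omega>. g (X i \<omega>)) = expectation (\<lambda>\<omega>. g (X 1 \<omega>))"
    if "g \<in> borel_measurable borel" for g :: "real \<Rightarrow> real"
    by (rule integral_comp_eq_if_distr_eq[OF X_id[OF i] X_i that])
  show "integrable M (\<lambda>\<omega>. h \<omega> * X i \<omega>)"
    by (rule indep_var_integrable[OF indep_h_X h_int X_i_int])
  show "expectation (\<lambda>\<omega>. h \<omega> * X i \<omega>) = expectation h * expectation (X 1)"
    using indep_var_lebesgue_integral[OF indep_h_X h_int X_i_int] E_X_i[of "\<lambda>x. x"] by simp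
  have "indep_var borel h borel (\<lambda>\<omega>. \<bar>X i \<omega>\<bar>)"
    using indep_var_compose[OF indep_h_X, of "\<lambda>x. x" borel abs borel] by (simp add: comp_def)
  then have "expectation (\<lambda>\<omega>. h \<omega> * \<bar>X i \<omega>\<bar>) = expectation h * expectation (\<lambda>\<omega>. \<bar>X i \<omega>\<bar>)"
    by (rule indep_var_lebesgue_integral) (use h_int X_i_int in simp_all)
  then show "expectation (\<lambda>\<omega>. norm (h \<omega> * X i \<omega>)) = expectation h * expectation (\<lambda>\<omega>. norm (X 1 \<omega>))"
    using E_X_i[of abs] by (simp add: abs_mult h_def pending_weight_nonneg)
qed

lemma summable_expectation_pending_weight:
  assumes \<delta>: "\<delta> \<ge> 0" and t: "t \<ge> 0"
  shows "summable (\<lambda>j. expectation (\<lambda>\<omega>. pending_weight \<delta> t (T (Suc j) \<omega>) (L (Suc j) \<omega>)))"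
proof (rule summable_comparison_test[OF _ summable_prob_arrival_le[of t]])
  show "\<exists>N. \<forall>n\<ge>N. norm (expectation (\<lambda>\<omega>. pending_weight \<delta> t (T (Suc n) \<omega>) (L (Suc n) \<omega>)))
      \<le> prob {\<omega> \<in> space M. T (Suc n) \<omega> \<le> t}"
    using expectation_pending_weight_le[OF \<delta> t] by (auto simp: integral_nonneg_AE pending_weight_nonneg)
qed

lemma suminf_expectation_pending_weight:
  assumes \<delta>: "\<delta> \<ge> 0" and t: "t \<ge> 0"
  shows "(\<Sum>j. expectation (\<lambda>\<omega>. pending_weight \<delta> t (T (Suc j) \<omega>) (L (Suc j) \<omega>)))
           = (\<integral>x. pending_kernel w \<delta> t x \<partial>renewal_measure)"
    (is "(\<Sum>j. ?E j) = _")
proof -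
  have E_nonneg: "0 \<le> ?E j" for j
    by (simp add: integral_nonneg_AE pending_weight_nonneg)
  have "(\<integral>\<^sup>+x. ennreal (pending_kernel w \<delta> t x) \<partial>renewal_measure) = (\<Sum>j. ennreal (?E j))"
    using \<delta> t by (simp add: nn_integral_renewal_measure ennreal_expectation_pending_weight)
  also have "\<dots> = ennreal (\<Sum>j. ?E j)"
    by (intro suminf_ennreal2 E_nonneg summable_expectation_pending_weight[OF \<delta> t])
  finally show ?thesis
    using w_nonneg summable_expectation_pending_weight[OF \<delta> t]
    by (subst (asm) nn_integral_eq_integrable) (auto simp: pending_kernel_nonneg E_nonneg intro!: suminf_nonneg)
qed

lemma expectation_IBNR_disc:
  assumes \<delta>: "\<delta> \<ge> 0" and t: "t \<ge> 0"
  shows "expectation (IBNR_disc tau X L \<delta> t)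
           = expectation (X 1) * exp (- \<delta> * t) *
             (LINT x:{0..t}|interval_measure (renewal_fun F). dickson_hipp \<delta> w (t - x))"
proof -
  define h where "h j \<omega> = pending_weight \<delta> t (T (Suc j) \<omega>) (L (Suc j) \<omega>)" for j \<omega>
  note claim = expectation_pending_claim[of "Suc j" \<delta> t for j, OF _ \<delta> t, folded h_def]
  have sum_h: "summable (\<lambda>j. expectation (h j))"
    unfolding h_def by (rule summable_expectation_pending_weight[OF \<delta> t])
  have "expectation (IBNR_disc tau X L \<delta> t) = expectation (\<lambda>\<omega>. \<Sum>j. h j \<omega> * X (Suc j) \<omega>)"
    by (simp add: IBNR_disc_def[abs_def] h_def pending_weight_def Let_def)
  also have "\<dots> = (\<Sum>j. expectation (h j) * expectation (X 1))"
    using sum_h claim by (subst integral_suminf_if_summable_integral_norm) (auto intro!: summable_mult2)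
  also have "\<dots> = (\<Sum>j. expectation (h j)) * expectation (X 1)"
    by (rule suminf_mult2[OF sum_h, symmetric])
  also have "(\<Sum>j. expectation (h j)) = (\<integral>x. pending_kernel w \<delta> t x \<partial>renewal_measure)"
    unfolding h_def by (rule suminf_expectation_pending_weight[OF \<delta> t])
  also have "\<dots> = exp (- \<delta> * t) * (LINT x:{0..t}|renewal_measure. dickson_hipp \<delta> w (t - x))"
    using AE_renewal_measure_pos unfolding set_lebesgue_integral_def
    by (subst integral_mult_right_zero[symmetric], intro integral_cong_AE)
      (auto simp: pending_kernel_def indicator_def elim!: eventually_mono)
  finally show ?thesis
    by (simp add: interval_measure_renewal_fun mult.assoc mult.commute mult.left_commute)
qed

end

theorem proposition1:
  fixes M :: "'a measure"
    and tau X L :: "nat \<Rightarrow> 'a \<Rightarrow> real"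
    and F f W w :: "real \<Rightarrow> real"
    and \<delta> t :: real
  assumes M: "prob_space M"
    and indep: "prob_space.indep_vars M (\<lambda>_. borel)
          (\<lambda>(k::nat, i). if k = 0 then tau i else if k = 1 then X i else L i)
          ({0, 1, 2} \<times> {1..})"
    and tau_id: "\<And>i. i \<ge> 1 \<Longrightarrow> distr M borel (tau i) = distr M borel (tau 1)"
    and X_id: "\<And>i. i \<ge> 1 \<Longrightarrow> distr M borel (X i) = distr M borel (X 1)"
    and L_id: "\<And>i. i \<ge> 1 \<Longrightarrow> distr M borel (L i) = distr M borel (L 1)"
    and tau_pos: "\<And>i. i \<ge> 1 \<Longrightarrow> AE \<omega> in M. tau i \<omega> > 0"
    and F_def: "\<And>x. F x = measure M {\<omega> \<in> space M. tau 1 \<omega> \<le> x}"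
    and f_nonneg: "\<And>x. 0 \<le> f x"
    and f_pdf: "distributed M lborel (tau 1) (\<lambda>x. ennreal (f x))"
    and W_def: "\<And>x. W x = measure M {\<omega> \<in> space M. L 1 \<omega> \<le> x}"
    and w_nonneg: "\<And>x. 0 \<le> w x"
    and w_pdf: "distributed M lborel (L 1) (\<lambda>x. ennreal (w x))"
    and X_int: "integrable M (X 1)"
    and delta: "\<delta> \<ge> 0"
    and t: "t > 0"
  shows "(LINT \<omega>|M. IBNR_disc tau X L \<delta> t \<omega>)
           = (LINT \<omega>|M. X 1 \<omega>) * exp (- \<delta> * t) *
             (LINT x:{0..t}|interval_measure (renewal_fun F). dickson_hipp \<delta> w (t - x))
       \<and> (LINT \<omega>|M. IBNR_disc tau X L 0 t \<omega>)
           = (LINT \<omega>|M. X 1 \<omega>) *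
             (LINT x:{0..t}|interval_measure (renewal_fun F). 1 - W (t - x))"
proof -
  interpret ibnr_model M tau X L F w
    by (rule ibnr_model.intro[OF M ibnr_model_axioms.intro[OF indep tau_id X_id L_id tau_pos F_def
          w_nonneg w_pdf X_int]])
  have survival: "dickson_hipp 0 w v = 1 - W v" for v
    using dickson_hipp_zero_eq_survival[OF w_pdf w_nonneg] by (simp only: W_def)
  have "0 \<le> t"
    using t by simp
  with expectation_IBNR_disc[OF delta] expectation_IBNR_disc[OF order_refl]
  show ?thesis
    by (simp add: survival)
qed

end
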